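(* Let $R$ be a Noetherian ring and $J=(f_1,\ldots,f_t)\subseteq I$ ideals such that $J\subseteq I$ is Aluffi torsion-free. For $1\le i\le t$ let $J_i=(f_1,\ldots,f_i)$. If $(J_{i}:_Rf_{i+1})=J_{i}$ for every $1\le i\le t-1$, then $J\subseteq I$ is strongly Aluffi torsion-free (with respect to the generators $f_1,\ldots,f_t$ in this order).
   Context: A pair of ideals $J\subseteq I$ in a ring $R$ is called Aluffi torsion-free if $J\cap I^n=JI^{n-1}$ for all $n\ge1$ (with $I^0=R$). For an ideal $J=(f_1,\ldots,f_t)\subseteq I$ with given ordered generators, the pair is called strongly Aluffi torsion-free if $J_i=(f_1,\ldots,f_i)\subseteq I$ is Aluffi torsion-free for each $i=1,\ldots,t$. *)

theory Defs
  imports "HOL-Algebra.Ideal_Product" "HOL-Algebra.Ring_Divisibility"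
begin

fun ideal_pow :: "('a, 'b) ring_scheme \<Rightarrow> 'a set \<Rightarrow> nat \<Rightarrow> 'a set" where
  "ideal_pow R I 0 = carrier R"
| "ideal_pow R I (Suc n) = ideal_prod R I (ideal_pow R I n)"

definition colon_ideal :: "('a, 'b) ring_scheme \<Rightarrow> 'a set \<Rightarrow> 'a \<Rightarrow> 'a set" where
  "colon_ideal R J f = {a \<in> carrier R. a \<otimes>\<^bsub>R\<^esub> f \<in> J}"

definition aluffi_torsion_free :: "('a, 'b) ring_scheme \<Rightarrow> 'a set \<Rightarrow> 'a set \<Rightarrow> bool" where
  "aluffi_torsion_free R J I \<longleftrightarrow> J \<subseteq> I \<and>
     (\<forall>n\<ge>1. J \<inter> ideal_pow R I n = ideal_prod R J (ideal_pow R I (n - 1)))"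

definition strongly_aluffi_torsion_free ::
  "('a, 'b) ring_scheme \<Rightarrow> (nat \<Rightarrow> 'a) \<Rightarrow> nat \<Rightarrow> 'a set \<Rightarrow> bool" where
  "strongly_aluffi_torsion_free R f t I \<longleftrightarrow>
     (\<forall>i\<in>{1..t}. aluffi_torsion_free R (genideal R (f ` {1..i})) I)"

end

theory Submission
  imports Defs
begin

text \<open>
  By descending induction on i it suffices to show that K \<subseteq> I is Aluffi torsion-free
  whenever K + (f) \<subseteq> I is, f \<in> I and (K : f) = K. This goes by induction on the power
  of I: an element x of K \<inter> I^(m+2) lies in (K + (f)) I^(m+1), so x = y + f a with
  y \<in> K I^(m+1) and a \<in> I^(m+1). Then f a \<in> K, so a \<in> K by the colon condition, hence
  a \<in> K \<inter> I^(m+1) = K I^m and f a \<in> K I^(m+1).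
\<close>

lemma aluffi_torsion_free_iff:
  "aluffi_torsion_free R J I \<longleftrightarrow>
     J \<subseteq> I \<and> (\<forall>m. J \<inter> ideal_pow R I (Suc m) = J \<cdot>\<^bsub>R\<^esub> ideal_pow R I m)"
proof -
  have "(\<forall>n\<ge>1. Q n) \<longleftrightarrow> (\<forall>m. Q (Suc m))" for Q :: "nat \<Rightarrow> bool"
    by (metis One_nat_def Suc_le_D Suc_le_mono le0)
  then show ?thesis
    unfolding aluffi_torsion_free_def by simp
qed

context ring
begin

lemma ideal_pow_ideal: "ideal I R \<Longrightarrow> ideal (ideal_pow R I n) R"
  by (induction n) (auto simp: oneideal ideal_prod_is_ideal)

lemma ideal_prod_mono_left:
  assumes "K \<subseteq> I" shows "K \<cdot> M \<subseteq> I \<cdot> M"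
proof
  fix z assume "z \<in> K \<cdot> M"
  then show "z \<in> I \<cdot> M"
    by induction (use assms in \<open>auto intro: ideal_prod.intros\<close>)
qed

lemma ideal_subset_set_add:
  assumes I: "ideal I R" and J: "ideal J R"
  shows "I \<subseteq> I <+> J"
proof -
  have "I \<union> J \<subseteq> carrier R" using ideal.Icarr[OF I] ideal.Icarr[OF J] by blast
  then show ?thesis using genideal_self union_genideal[OF I J] by blast
qed

lemma ideal_prod_pow_subset_inter:
  assumes K: "ideal K R" and I: "ideal I R" and KI: "K \<subseteq> I"
  shows "K \<cdot> ideal_pow R I m \<subseteq> K \<inter> ideal_pow R I (Suc m)"
  using ideal_prod_inter[OF K ideal_pow_ideal[OF I]] ideal_prod_mono_left[OF KI] by auto

end

context cring
begin

lemma cgenideal_prod_elem: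
  assumes M: "ideal M R" and f: "f \<in> carrier R" and z: "z \<in> (PIdl f) \<cdot> M"
  shows "\<exists>a\<in>M. z = f \<otimes> a"
  using z
proof induction
  case (prod i j)
  interpret M: ideal M R by (rule M)
  from prod obtain r where r: "r \<in> carrier R" "i = r \<otimes> f" unfolding cgenideal_def by blast
  with prod f have "i \<otimes> j = f \<otimes> (r \<otimes> j)" by (simp add: m_ac M.Icarr)
  with prod r show ?case using M.I_l_closed by blast
next
  case (sum s1 s2)
  interpret M: ideal M R by (rule M)
  from sum obtain a1 a2 where "a1 \<in> M" "a2 \<in> M" "s1 = f \<otimes> a1" "s2 = f \<otimes> a2" by blast
  with f show ?case by (intro bexI[of _ "a1 \<oplus> a2"]) (auto simp: r_distr M.Icarr M.a_closed)
qed

lemma genideal_insert: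
  assumes S: "S \<subseteq> carrier R" and a: "a \<in> carrier R"
  shows "Idl (insert a S) = Idl S <+> PIdl a"
proof -
  have IS: "ideal (Idl S) R" and Ia: "ideal (PIdl a) R"
    using S a by (simp_all add: genideal_ideal cgenideal_ideal)
  have "Idl (insert a S) = Idl (Idl S \<union> PIdl a)"
  proof (rule equalityI)
    have "insert a S \<subseteq> Idl S \<union> PIdl a"
      using S a genideal_self cgenideal_self by blast
    then show "Idl (insert a S) \<subseteq> Idl (Idl S \<union> PIdl a)"
      using IS Ia by (intro subset_Idl_subset) (auto dest: ideal.Icarr)
    have Iins: "ideal (Idl (insert a S)) R"
      using S a by (simp add: genideal_ideal)
    have "Idl S \<subseteq> Idl (insert a S)"
      using S a by (intro subset_Idl_subset) auto
    moreover have "PIdl a \<subseteq> Idl (insert a S)"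
      using S a genideal_self[of "insert a S"] by (intro cgenideal_minimal[OF Iins]) auto
    ultimately show "Idl (Idl S \<union> PIdl a) \<subseteq> Idl (insert a S)"
      by (intro genideal_minimal[OF Iins]) blast
  qed
  then show ?thesis
    by (simp add: union_genideal[OF IS Ia])
qed

lemma set_add_cgenideal_prod_elem:
  assumes K: "ideal K R" and N: "ideal N R" and f: "f \<in> carrier R"
    and x: "x \<in> (K <+> PIdl f) \<cdot> N"
  shows "\<exists>y\<in>K \<cdot> N. \<exists>a\<in>N. x = y \<oplus> f \<otimes> a"
proof -
  have P: "ideal (PIdl f) R" by (rule cgenideal_ideal[OF f])
  have "(K <+> PIdl f) \<cdot> N = N \<cdot> (K <+> PIdl f)"
    by (rule ideal_prod_commute[OF add_ideals[OF K P] N])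
  also have "\<dots> = (K \<cdot> N) <+> ((PIdl f) \<cdot> N)"
    by (simp add: ideal_prod_distr[OF N K P] ideal_prod_commute[OF N K] ideal_prod_commute[OF N P])
  finally obtain y z where "y \<in> K \<cdot> N" "z \<in> (PIdl f) \<cdot> N" "x = y \<oplus> z"
    using x unfolding set_add_def' by blast
  then show ?thesis using cgenideal_prod_elem[OF N f] by blast
qed

lemma inter_pow_subset_of_colon_eq:
  assumes K: "ideal K R" and I: "ideal I R" and f: "f \<in> I"
    and colon: "colon_ideal R K f = K"
    and IH: "K \<inter> ideal_pow R I (Suc m) \<subseteq> K \<cdot> ideal_pow R I m"
    and sum: "(K <+> PIdl f) \<inter> ideal_pow R I (Suc (Suc m)) \<subseteq> (K <+> PIdl f) \<cdot> ideal_pow R I (Suc m)"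
  shows "K \<inter> ideal_pow R I (Suc (Suc m)) \<subseteq> K \<cdot> ideal_pow R I (Suc m)"
proof
  let ?M = "ideal_pow R I m" and ?N = "ideal_pow R I (Suc m)"
  interpret K: ideal K R by (rule K)
  have fc: "f \<in> carrier R" by (rule ideal.Icarr[OF I f])
  have M: "ideal ?M R" and N: "ideal ?N R" by (rule ideal_pow_ideal[OF I])+
  fix x assume x: "x \<in> K \<inter> ideal_pow R I (Suc (Suc m))"
  have "K \<subseteq> K <+> PIdl f"
    by (rule ideal_subset_set_add[OF K cgenideal_ideal[OF fc]])
  with x sum have "x \<in> (K <+> PIdl f) \<cdot> ?N" by blast
  then obtain y a where y: "y \<in> K \<cdot> ?N" and a: "a \<in> ?N" and x_eq: "x = y \<oplus> f \<otimes> a"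
    using set_add_cgenideal_prod_elem[OF K N fc] by blast
  have yK: "y \<in> K" using y ideal_prod_inter[OF K N] by blast
  have ac: "a \<in> carrier R" by (rule ideal.Icarr[OF N a])
  have "f \<otimes> a = x \<oplus> \<ominus> y"
    using x_eq yK ac fc by (simp add: a_comm r_neg1 K.Icarr)
  also have "\<dots> \<in> K" using x yK K.a_closed K.a_inv_closed by blast
  finally have "a \<in> colon_ideal R K f"
    unfolding colon_ideal_def using ac fc by (simp add: m_comm)
  with colon a IH have "a \<in> K \<cdot> ?M" by blast
  then have "f \<otimes> a \<in> I \<cdot> (K \<cdot> ?M)" by (rule ideal_prod.prod[OF f])
  also have "I \<cdot> (K \<cdot> ?M) = K \<cdot> ?N"
    by (simp add: ideal_prod_assoc[OF I K M, symmetric] ideal_prod_commute[OF I K] ideal_prod_assoc[OF K I M])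
  finally have "f \<otimes> a \<in> K \<cdot> ?N" .
  interpret KN: ideal "K \<cdot> ?N" R using K N by (rule ideal_prod_is_ideal)
  show "x \<in> K \<cdot> ?N"
    using x_eq y \<open>f \<otimes> a \<in> K \<cdot> ?N\<close> KN.a_closed by simp
qed

lemma aluffi_torsion_free_of_colon_eq:
  assumes K: "ideal K R" and I: "ideal I R" and f: "f \<in> I" and KI: "K \<subseteq> I"
    and colon: "colon_ideal R K f = K"
    and torsion_free: "aluffi_torsion_free R (K <+> PIdl f) I"
  shows "aluffi_torsion_free R K I"
  unfolding aluffi_torsion_free_iff
proof (intro conjI allI KI)
  fix m show "K \<inter> ideal_pow R I (Suc m) = K \<cdot> ideal_pow R I m"
  proof (induction m)
    case 0
    show ?case using KI by (auto simp: ideal_prod_one[OF I] ideal_prod_one[OF K])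
  next
    case (Suc m)
    show ?case
    proof (rule equalityI)
      show "K \<inter> ideal_pow R I (Suc (Suc m)) \<subseteq> K \<cdot> ideal_pow R I (Suc m)"
        using torsion_free Suc.IH unfolding aluffi_torsion_free_iff
        by (intro inter_pow_subset_of_colon_eq[OF K I f colon equalityD1]) blast+
      show "K \<cdot> ideal_pow R I (Suc m) \<subseteq> K \<inter> ideal_pow R I (Suc (Suc m))"
        by (rule ideal_prod_pow_subset_inter[OF K I KI])
    qed
  qed
qed

end

theorem proposition2p12:
  fixes R :: "('a, 'b) ring_scheme" and f :: "nat \<Rightarrow> 'a" and t :: nat and I :: "'a set"
  assumes "cring R" and "noetherian_ring R"
    and "ideal I R"
    and "f ` {1..t} \<subseteq> carrier R"
    and "genideal R (f ` {1..t}) \<subseteq> I"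
    and "aluffi_torsion_free R (genideal R (f ` {1..t})) I"
    and "\<forall>i. 1 \<le> i \<and> i \<le> t - 1 \<longrightarrow>
           colon_ideal R (genideal R (f ` {1..i})) (f (i + 1)) = genideal R (f ` {1..i})"
  shows "strongly_aluffi_torsion_free R f t I"
proof -
  interpret cring R by fact
  have carr: "f ` {1..i} \<subseteq> carrier R" if "i \<le> t" for i
    using assms(4) that by auto
  have gens_in_I: "f ` {1..t} \<subseteq> I"
    using genideal_self[OF carr] assms(5) by blast
  have "aluffi_torsion_free R (Idl\<^bsub>R\<^esub> (f ` {1..i})) I" if "1 \<le> i" "i \<le> t" for i
    using \<open>i \<le> t\<close>
  proof (induction i rule: inc_induct)
    case base
    show ?case by (rule assms(6))
  next
    case (step n)
    have n: "1 \<le> n" "n \<le> t - 1" "Suc n \<in> {1..t}" using step.hyps that by auto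
    have "f (Suc n) \<in> carrier R" using assms(4) n(3) by auto
    then have "Idl\<^bsub>R\<^esub> (f ` {1..Suc n}) = Idl\<^bsub>R\<^esub> (f ` {1..n}) <+>\<^bsub>R\<^esub> PIdl\<^bsub>R\<^esub> f (Suc n)"
      using carr[of n] n by (simp add: atLeastAtMostSuc_conv genideal_insert)
    moreover have "f ` {1..n} \<subseteq> I" using gens_in_I n by auto
    ultimately show ?case
      using step.IH n gens_in_I assms(7) carr[of n]
      by (intro aluffi_torsion_free_of_colon_eq[OF genideal_ideal assms(3)]
            genideal_minimal[OF assms(3)]) auto
  qed
  then show ?thesis
    unfolding strongly_aluffi_torsion_free_def by auto
qed

end
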